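(* Let $I$ be a $P$-interval of $\mathcal{P}$ with $|I|\geq 2$ and $D(I)=\{x_1,\ldots,x_r\}$. Then $I$ is a $b$-nested common interval if and only if there is some $i$ with $1\leq i\leq r$ such that $Int(x_i)$ is a $b$-nested common interval of size at least $|I|-b$.
   Context: Let $n\geq 1$, $K\geq 1$ and let $\mathcal{P}=\{P_1,\ldots,P_K\}$ be permutations of $\{1,\ldots,n\}$ with $P_1=(1,2,\ldots,n)$. For integers $i\leq j$ write $(i..j)=\{i,\ldots,j\}$. A common interval of $\mathcal{P}$ is a set of integers occupying consecutive positions in every $P_k$; all have the form $(i..j)$, and singletons and $(1..n)$ are common. Fix a positive integer $b$. A common interval $I$ is $b$-small if $|I|\leq b$, $b$-large otherwise; it is $b$-nested if $|I|=1$ or $I$ strictly contains a $b$-nested common interval $J$ with $|J|\geq|I|-b$ (recursive on size). Two intervals $(i..j)$, $(k..l)$ overlap if $i<k\leq j<l$ or $k<i\leq l<j$. A common interval is strong if it overlaps no other common interval. The PQ-tree $T$: nodes are the strong common intervals ($Int(x)$ is the interval of node $x$), root $(1..n)$, leaves the singletons, parent of $y$ is the node whose interval is the smallest strong common interval strictly containing $Int(y)$. A node $x$ with children set $D$ is a $P$-node if no union $\bigcup_{z\in D'}Int(z)$, $D'\subset D$, $2\leq|D'|<|D|$, is common; otherwise it is a $Q$-node with children ordered $y_1,\ldots,y_r$ so that $\max Int(y_i)+1=\min Int(y_{i+1})$. It is known that a set is a common interval iff it is $Int(x)$ for a node $x$ or the union of the intervals of consecutive children of a unique $Q$-node. The domain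 $D(I)$ of a common interval $I$ is the set of children of $x$ if $I=Int(x)$ is strong, and otherwise the set of consecutive children of the $Q$-node whose intervals have union $I$. A $P$-interval is a strong common interval $Int(x)$ with $x$ a $P$-node; all other common intervals are $Q$-intervals. *)

theory Defs
  imports Main
begin

definition is_perm :: "nat \<Rightarrow> nat list \<Rightarrow> bool" where
  "is_perm n p \<longleftrightarrow> distinct p \<and> set p = {1..n}"

definition valid_family :: "nat \<Rightarrow> nat list list \<Rightarrow> bool" where
  "valid_family n Ps \<longleftrightarrow> Ps \<noteq> [] \<and> hd Ps = [1..<n+1] \<and> (\<forall>p\<in>set Ps. is_perm n p)"

definition consec :: "nat list \<Rightarrow> nat set \<Rightarrow> bool" where
  "consec p S \<longleftrightarrow> (\<exists>i j. i \<le> j \<and> j < length p \<and> S = (\<lambda>k. p ! k) ` {i..j})"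

definition common :: "nat list list \<Rightarrow> nat set \<Rightarrow> bool" where
  "common Ps S \<longleftrightarrow> (\<forall>p\<in>set Ps. consec p S)"

definition overlap :: "nat set \<Rightarrow> nat set \<Rightarrow> bool" where
  "overlap A B \<longleftrightarrow>
     (Min A < Min B \<and> Min B \<le> Max A \<and> Max A < Max B) \<or>
     (Min B < Min A \<and> Min A \<le> Max B \<and> Max B < Max A)"

definition strong :: "nat list list \<Rightarrow> nat set \<Rightarrow> bool" where
  "strong Ps S \<longleftrightarrow> common Ps S \<and> (\<forall>T. common Ps T \<longrightarrow> \<not> overlap S T)"

text \<open>PQ-tree: nodes are identified with their (strong) intervals; y is a child of x iff
 x is the smallest strong interval strictly containing y.\<close>
definition children :: "nat list list \<Rightarrow> nat set \<Rightarrow> nat set set" where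
  "children Ps X = {Y. strong Ps Y \<and> Y \<subset> X \<and>
      (\<forall>Z. strong Ps Z \<and> Y \<subset> Z \<longrightarrow> X \<subseteq> Z)}"

definition P_node :: "nat list list \<Rightarrow> nat set \<Rightarrow> bool" where
  "P_node Ps X \<longleftrightarrow> strong Ps X \<and>
     (\<forall>D'. D' \<subset> children Ps X \<and> 2 \<le> card D' \<longrightarrow> \<not> common Ps (\<Union>D'))"

definition P_interval :: "nat list list \<Rightarrow> nat set \<Rightarrow> bool" where
  "P_interval Ps I \<longleftrightarrow> strong Ps I \<and> P_node Ps I"

inductive nested :: "nat list list \<Rightarrow> nat \<Rightarrow> nat set \<Rightarrow> bool" for Ps b where
  single: "common Ps I \<Longrightarrow> card I = 1 \<Longrightarrow> nested Ps b I"
| step: "common Ps I \<Longrightarrow> nested Ps b J \<Longrightarrow> J \<subset> I \<Longrightarrow> card I \<le> card J + b \<Longrightarrow> nested Ps b I"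

end

theory Submission
  imports Defs
begin

text \<open>Common intervals of a family containing the identity permutation are integer intervals,
  and strong ones are laminar with respect to all common intervals. The children of a strong
  interval of size at least 2 therefore partition it, and a proper common subinterval J of a
  P-interval I lies inside a single child: otherwise the children meeting J would be at least two,
  not all of them, and their union J would be common, contradicting that I is a P-node. Hence a
  nesting chain ending in I can be rerouted through the child containing its predecessor.\<close>

lemma common_imp_atLeastAtMost:
  assumes "valid_family n Ps" "common Ps S"
  obtains a c where "a \<le> c" "S = {a..c}" "S \<subseteq> {1..n}"
proof -
  have "hd Ps \<in> set Ps" "hd Ps = [1..<n+1]"
    using assms(1) unfolding valid_family_def by (metis hd_in_set)+
  hence "consec [1..<n+1] S" using assms(2) unfolding common_def by metis
  then obtain i j where ij: "i \<le> j" "j < n" "S = (\<lambda>k. [1..<n+1] ! k) ` {i..j}"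
    unfolding consec_def by (auto simp del: upt_Suc)
  have "S = Suc ` {i..j}"
    unfolding ij(3) using ij(2) by (intro image_cong) (auto simp del: upt_Suc simp: nth_upt)
  also have "\<dots> = {Suc i..Suc j}" by (simp add: image_Suc_atLeastAtMost)
  finally show ?thesis using ij that by auto
qed

lemma common_finite_nonempty:
  assumes "valid_family n Ps" "common Ps S"
  shows "finite S" "S \<noteq> {}"
  using common_imp_atLeastAtMost[OF assms]
  by (metis finite_atLeastAtMost, metis atLeastAtMost_iff empty_iff order_refl)

lemma strong_common_nested:
  assumes "valid_family n Ps" "strong Ps A" "common Ps B" "A \<inter> B \<noteq> {}"
  shows "A \<subseteq> B \<or> B \<subseteq> A"
proof -
  have "common Ps A" and no_overlap: "\<not> overlap A B"
    using assms(2,3) unfolding strong_def by auto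
  obtain a c where A: "a \<le> c" "A = {a..c}"
    using common_imp_atLeastAtMost[OF assms(1) \<open>common Ps A\<close>] .
  obtain a' c' where B: "a' \<le> c'" "B = {a'..c'}" using common_imp_atLeastAtMost[OF assms(1,3)] .
  have "Min A = a" "Max A = c" "Min B = a'" "Max B = c'"
    using A B by (auto intro!: Min_eqI Max_eqI)
  hence "\<not> (a < a' \<and> a' \<le> c \<and> c < c')" "\<not> (a' < a \<and> a \<le> c' \<and> c' < c)"
    using no_overlap unfolding overlap_def by auto
  moreover obtain y where "y \<in> A" "y \<in> B" using assms(4) by blast
  ultimately have "(a' \<le> a \<and> c \<le> c') \<or> (a \<le> a' \<and> c' \<le> c)"
    using A B by auto
  thus ?thesis using A B by auto
qed

lemma strong_singleton:
  assumes "valid_family n Ps" "x \<in> {1..n}"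
  shows "strong Ps {x}"
proof -
  have "common Ps {x}" unfolding common_def consec_def
  proof
    fix p assume "p \<in> set Ps"
    hence "x \<in> set p" using assms unfolding valid_family_def is_perm_def by auto
    then obtain k where "k < length p" "p ! k = x" by (auto simp: in_set_conv_nth)
    thus "\<exists>i j. i \<le> j \<and> j < length p \<and> {x} = (!) p ` {i..j}"
      by (intro exI[of _ k] exI[of _ k]) auto
  qed
  thus ?thesis unfolding strong_def overlap_def by auto
qed

lemma children_strong_psubset:
  assumes "Y \<in> children Ps X"
  shows "strong Ps Y" "Y \<subset> X"
  using assms unfolding children_def by auto

text \<open>The child containing x is a maximal strong proper subset of I containing x; the singleton
  of x shows there is one.\<close>

lemma Union_children:
  assumes vf: "valid_family n Ps" and "strong Ps I" and "2 \<le> card I"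
  shows "\<Union>(children Ps I) = I"
proof
  show "\<Union>(children Ps I) \<subseteq> I" unfolding children_def by auto
next
  have cmI: "common Ps I" using \<open>strong Ps I\<close> unfolding strong_def by simp
  obtain a c where I: "I = {a..c}" "I \<subseteq> {1..n}" using common_imp_atLeastAtMost[OF vf cmI] by metis
  show "I \<subseteq> \<Union>(children Ps I)"
  proof
    fix x assume "x \<in> I"
    define C where "C = {Y. strong Ps Y \<and> x \<in> Y \<and> Y \<subset> I}"
    have "{x} \<in> C"
      using \<open>2 \<le> card I\<close> \<open>x \<in> I\<close> I(2) strong_singleton[OF vf] unfolding C_def by fastforce
    moreover have "\<forall>Z. Z \<in> C \<longrightarrow> card Z < card I"
      unfolding C_def using psubset_card_mono[of I] by (simp add: I(1))
    ultimately obtain Y where Y: "Y \<in> C" and max: "\<And>Z. Z \<in> C \<Longrightarrow> card Z \<le> card Y"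
      using Lattices_Big.ex_has_greatest_nat[of "\<lambda>Y. Y \<in> C" "{x}" card "card I"] by blast
    have "Y \<in> children Ps I" unfolding children_def
    proof (intro CollectI conjI allI impI)
      show "strong Ps Y" "Y \<subset> I" using Y unfolding C_def by auto
      fix Z assume Z: "strong Ps Z \<and> Y \<subset> Z"
      have "Z \<subseteq> I \<or> I \<subseteq> Z"
        using strong_common_nested[OF vf _ cmI] Z Y unfolding C_def by blast
      moreover have "\<not> Z \<subset> I"
      proof
        assume "Z \<subset> I"
        hence "card Z \<le> card Y" using Z Y by (intro max) (auto simp: C_def)
        moreover have "card Y < card Z"
          using Z \<open>Z \<subset> I\<close> by (intro psubset_card_mono) (auto simp: I intro: finite_subset)
        ultimately show False by simp
      qed
      ultimately show "I \<subseteq> Z" by auto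
    qed
    thus "x \<in> \<Union>(children Ps I)" using Y unfolding C_def by auto
  qed
qed

lemma P_node_common_subset_child:
  assumes vf: "valid_family n Ps" and PI: "P_node Ps I" and "2 \<le> card I"
    and cJ: "common Ps J" and "J \<subset> I"
  shows "\<exists>Y\<in>children Ps I. J \<subseteq> Y"
proof (rule ccontr)
  assume not_in_child: "\<not> (\<exists>Y\<in>children Ps I. J \<subseteq> Y)"
  have sI: "strong Ps I" using PI unfolding P_node_def by simp
  define D where "D = {Y\<in>children Ps I. Y \<inter> J \<noteq> {}}"
  have "Y \<subseteq> J" if "Y \<in> D" for Y
    using that not_in_child strong_common_nested[OF vf _ cJ] children_strong_psubset(1)
    unfolding D_def by blast
  moreover have "J \<subseteq> \<Union>D"
  proof
    fix x assume "x \<in> J"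
    then obtain Y where "Y \<in> children Ps I" "x \<in> Y"
      using Union_children[OF vf sI \<open>2 \<le> card I\<close>] \<open>J \<subset> I\<close> by blast
    thus "x \<in> \<Union>D" using \<open>x \<in> J\<close> unfolding D_def by blast
  qed
  ultimately have UD: "\<Union>D = J" by blast
  have "D \<noteq> children Ps I"
    using UD Union_children[OF vf sI \<open>2 \<le> card I\<close>] \<open>J \<subset> I\<close> by auto
  hence "D \<subset> children Ps I" unfolding D_def by blast
  moreover have "2 \<le> card D"
  proof (rule ccontr)
    have "finite D"
      using common_finite_nonempty(1)[OF vf cJ] UD by (simp add: finite_UnionD)
    moreover assume "\<not> 2 \<le> card D"
    moreover have "D \<noteq> {}" using UD common_finite_nonempty(2)[OF vf cJ] by auto
    ultimately have "card D = 1" using card_0_eq[of D] by linarith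
    then obtain Y where "D = {Y}" by (rule card_1_singletonE)
    thus False using UD not_in_child unfolding D_def by auto
  qed
  ultimately have "\<not> common Ps (\<Union>D)" using PI unfolding P_node_def by blast
  thus False using UD cJ by simp
qed

lemma nested_common: "nested Ps b J \<Longrightarrow> common Ps J"
  by (induction rule: nested.induct) auto

lemma nested_superset:
  assumes "nested Ps b J" "common Ps Y" "J \<subseteq> Y" "finite Y" "card Y \<le> card J + b"
  shows "nested Ps b Y"
  using assms nested.step[of Ps Y b J] by (cases "J = Y") auto

theorem lemma2:
  fixes n b :: nat and Ps :: "nat list list" and I :: "nat set"
  assumes "n \<ge> 1" and "b \<ge> 1" and "valid_family n Ps"
    and "P_interval Ps I" and "card I \<ge> 2"
  shows "nested Ps b I \<longleftrightarrow> (\<exists>X\<in>children Ps I. nested Ps b X \<and> card I \<le> card X + b)"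
proof
  have cmI: "common Ps I" using assms(4) unfolding P_interval_def strong_def by simp
  have "finite I" using common_finite_nonempty(1)[OF assms(3) cmI] .
  assume "nested Ps b I"
  then obtain J where J: "nested Ps b J" "J \<subset> I" "card I \<le> card J + b"
    using assms(5) by (cases rule: nested.cases) auto
  then obtain X where X: "X \<in> children Ps I" "J \<subseteq> X"
    using P_node_common_subset_child[OF assms(3) _ assms(5) nested_common]
      assms(4) unfolding P_interval_def by blast
  note sX = children_strong_psubset[OF X(1)]
  have "finite X" using sX(2) \<open>finite I\<close> by (meson finite_subset psubset_imp_subset)
  have "card J \<le> card X" "card X \<le> card I"
    using X(2) sX(2) \<open>finite X\<close> \<open>finite I\<close> by (auto intro: card_mono)
  hence "nested Ps b X"
    using nested_superset[OF J(1) _ X(2) \<open>finite X\<close>] sX(1) J(3) unfolding strong_def by simp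
  thus "\<exists>X\<in>children Ps I. nested Ps b X \<and> card I \<le> card X + b"
    using X(1) J(3) \<open>card J \<le> card X\<close> by auto
next
  assume "\<exists>X\<in>children Ps I. nested Ps b X \<and> card I \<le> card X + b"
  then obtain X where "X \<in> children Ps I" "nested Ps b X" "card I \<le> card X + b" by blast
  thus "nested Ps b I"
    using nested.step children_strong_psubset(2) assms(4)
    unfolding P_interval_def strong_def by blast
qed

end
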